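(* Let $q\ge2$ be a prime power and let $\mathcal{S}$ be a regular spread of lines in $\mathrm{PG}(3,q)$. Let $l_1,l_2,l_3$ be three lines of $\mathcal{S}$, let $\mathcal{R}$ be the unique regulus containing them, and let $l_4\in\mathcal{S}\setminus\mathcal{R}$. Then for every ordering $\{i_1,i_2,i_3,i_4\}=\{1,2,3,4\}$, the line $l_{i_4}$ can be obtained from $l_{i_1},l_{i_2},l_{i_3}$ by $(3,1)$-repair, i.e. there exist points $P_j\in l_{i_j}$ ($j=1,2,3$) with $l_{i_4}\subseteq\langle P_1,P_2,P_3\rangle$.
   Context: A spread of $\mathrm{PG}(3,q)$ is a set of $q^2+1$ pairwise skew lines partitioning the points. For three pairwise skew lines, the regulus they determine is the set of $q+1$ lines meeting every transversal line of the three (a transversal being a line meeting all three); a spread is regular if for any three of its lines, the regulus they determine is contained in the spread. *)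

theory Defs
  imports "HOL-Analysis.Analysis"
begin

text \<open>Model of PG(3,q): the underlying vector space is F^4 for a finite field F
  (a type of class field and finite; q = CARD of that type, automatically a prime power \<ge> 2).\<close>

definition pg_point :: "(('a::{field,finite}) ^ 4) set \<Rightarrow> bool" where
  "pg_point P \<longleftrightarrow> vec.subspace P \<and> vec.dim P = 1"

definition pg_line :: "(('a::{field,finite}) ^ 4) set \<Rightarrow> bool" where
  "pg_line l \<longleftrightarrow> vec.subspace l \<and> vec.dim l = 2"

definition pg_meet :: "(('a::{field,finite}) ^ 4) set \<Rightarrow> ('a ^ 4) set \<Rightarrow> bool" where
  "pg_meet U W \<longleftrightarrow> U \<inter> W \<noteq> {0}"

definition skew :: "(('a::{field,finite}) ^ 4) set \<Rightarrow> ('a ^ 4) set \<Rightarrow> bool" where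
  "skew l m \<longleftrightarrow> \<not> pg_meet l m"

definition spread :: "(('a::{field,finite}) ^ 4) set set \<Rightarrow> bool" where
  "spread S \<longleftrightarrow> (\<forall>l\<in>S. pg_line l) \<and> card S = CARD('a)^2 + 1
     \<and> (\<forall>l\<in>S. \<forall>m\<in>S. l \<noteq> m \<longrightarrow> skew l m)
     \<and> (\<forall>P. pg_point P \<longrightarrow> (\<exists>!l\<in>S. P \<subseteq> l))"

definition transversal :: "(('a::{field,finite}) ^ 4) set \<Rightarrow> ('a ^ 4) set \<Rightarrow> ('a ^ 4) set \<Rightarrow> ('a ^ 4) set \<Rightarrow> bool" where
  "transversal t l1 l2 l3 \<longleftrightarrow> pg_line t \<and> pg_meet t l1 \<and> pg_meet t l2 \<and> pg_meet t l3"

definition regulus :: "(('a::{field,finite}) ^ 4) set \<Rightarrow> ('a ^ 4) set \<Rightarrow> ('a ^ 4) set \<Rightarrow> ('a ^ 4) set set" where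
  "regulus l1 l2 l3 = {m. pg_line m \<and> (\<forall>t. transversal t l1 l2 l3 \<longrightarrow> pg_meet m t)}"

definition regular_spread :: "(('a::{field,finite}) ^ 4) set set \<Rightarrow> bool" where
  "regular_spread S \<longleftrightarrow> spread S \<and>
     (\<forall>l1\<in>S. \<forall>l2\<in>S. \<forall>l3\<in>S. l1 \<noteq> l2 \<and> l1 \<noteq> l3 \<and> l2 \<noteq> l3 \<longrightarrow> regulus l1 l2 l3 \<subseteq> S)"

definition repair31 :: "(('a::{field,finite}) ^ 4) set \<Rightarrow> ('a ^ 4) set \<Rightarrow> ('a ^ 4) set \<Rightarrow> ('a ^ 4) set \<Rightarrow> bool" where
  "repair31 l1 l2 l3 l4 \<longleftrightarrow> (\<exists>P1 P2 P3. pg_point P1 \<and> pg_point P2 \<and> pg_point P3 \<and>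
     P1 \<subseteq> l1 \<and> P2 \<subseteq> l2 \<and> P3 \<subseteq> l3 \<and> l4 \<subseteq> vec.span (P1 \<union> P2 \<union> P3))"

end

(* Some transversal t of l1, l2, l3 misses l4, because l4 lies outside their regulus, so t meets
  exactly three of the four lines.

  Suppose t meets the line a carrying the first point, and let v be a point of t on a.  The plane
  joining v to the target line d meets the other two lines in points w and u.  If v, w, u span this
  plane, they span d.  Otherwise they lie on a line through v meeting the other three lines; but
  through v there is only one line meeting two given skew lines, namely t, and t misses one of the
  three.  If instead t misses a, exchange the roles of the first two lines. *)

theory Submission
  imports Defs
begin

lemma subspace_inter_nontrivial:
  fixes U W X :: "('a::field ^ 'n) set"
  assumes "vec.subspace U" "vec.subspace W" "vec.subspace X" "U \<subseteq> X" "W \<subseteq> X"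
    and "vec.dim X < vec.dim U + vec.dim W"
  shows "U \<inter> W \<noteq> {0}"
proof
  assume trivial: "U \<inter> W = {0}"
  have "{x + y |x y. x \<in> U \<and> y \<in> W} \<subseteq> X"
    using assms(3-5) vec.subspace_add by blast
  then have "vec.dim {x + y |x y. x \<in> U \<and> y \<in> W} \<le> vec.dim X"
    by (rule vec.dim_subset)
  moreover have "vec.dim (U \<inter> W) = 0"
    unfolding trivial by (metis vec.dim_span vec.span_empty vec.dim_empty)
  ultimately show False
    using vec.dim_sums_Int[OF assms(1,2)] assms(6) by linarith
qed

lemma dim_span_insert:
  fixes U :: "('a::field ^ 'n) set"
  assumes "vec.subspace U" "v \<notin> U"
  shows "vec.dim (vec.span (insert v U)) = vec.dim U + 1"
  using assms by (metis vec.dim_insert vec.dim_span vec.span_eq_iff)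

lemma dim_span_pair:
  fixes v x :: "'a::field ^ 'n"
  assumes "x \<noteq> 0" "v \<notin> vec.span {x}"
  shows "vec.dim (vec.span {v, x}) = 2"
  using assms by (simp add: vec.dim_insert vec.span_eq_iff)

definition pg_plane :: "(('a::{field,finite}) ^ 4) set \<Rightarrow> bool" where
  "pg_plane P \<longleftrightarrow> vec.subspace P \<and> vec.dim P = 3"

lemma pg_meet_iff:
  fixes U W :: "(('a::{field,finite}) ^ 4) set"
  assumes "vec.subspace U" "vec.subspace W"
  shows "pg_meet U W \<longleftrightarrow> (\<exists>x. x \<noteq> 0 \<and> x \<in> U \<and> x \<in> W)"
  using assms vec.subspace_0 unfolding pg_meet_def by auto

lemma pg_meet_commute: "pg_meet U W \<longleftrightarrow> pg_meet W U"
  unfolding pg_meet_def by (simp add: Int_commute)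

lemma skew_commute: "skew l m \<longleftrightarrow> skew m l"
  unfolding skew_def by (simp add: pg_meet_commute)

lemma skew_notin:
  assumes "skew l m" "v \<in> l" "v \<noteq> 0"
  shows "v \<notin> m"
  using assms unfolding skew_def pg_meet_def by auto

lemma pg_point_span_singleton:
  fixes v :: "('a::{field,finite}) ^ 4"
  assumes "v \<noteq> 0"
  shows "pg_point (vec.span {v})"
  using assms unfolding pg_point_def by (simp add: vec.dim_insert)

lemma pg_line_span_pair:
  fixes v x :: "('a::{field,finite}) ^ 4"
  assumes "x \<noteq> 0" "v \<notin> vec.span {x}"
  shows "pg_line (vec.span {v, x})"
  using dim_span_pair[OF assms] unfolding pg_line_def by simp

lemma pg_plane_join:
  assumes "pg_line l" "v \<notin> l"
  shows "pg_plane (vec.span (insert v l))"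
  using assms dim_span_insert[of l v] unfolding pg_line_def pg_plane_def by simp

lemma pg_meet_line_plane:
  assumes "pg_line l" "pg_plane P"
  shows "pg_meet l P"
  unfolding pg_meet_def
proof (rule subspace_inter_nontrivial[OF _ _ vec.subspace_UNIV subset_UNIV subset_UNIV])
  show "vec.subspace l" "vec.subspace P"
    using assms unfolding pg_line_def pg_plane_def by simp_all
  show "vec.dim (UNIV :: ('a ^ 4) set) < vec.dim l + vec.dim P"
    using assms unfolding vec_dim_card pg_line_def pg_plane_def by simp
qed

lemma pg_meet_lines_in_plane:
  assumes "pg_line l" "pg_line m" "pg_plane P" "l \<subseteq> P" "m \<subseteq> P"
  shows "pg_meet l m"
proof -
  have "vec.subspace l" "vec.subspace m" "vec.subspace P" "vec.dim P < vec.dim l + vec.dim m"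
    using assms(1-3) unfolding pg_line_def pg_plane_def by simp_all
  then show ?thesis
    unfolding pg_meet_def using subspace_inter_nontrivial assms(4,5) by blast
qed

lemma pg_line_eq_span_pair:
  assumes "pg_line t" "v \<in> t" "x \<in> t" "x \<noteq> 0" "v \<notin> vec.span {x}"
  shows "t = vec.span {v, x}"
proof -
  have "vec.span {v, x} \<subseteq> t"
    using assms(1-3) unfolding pg_line_def by (simp add: vec.span_minimal)
  moreover have "vec.dim t \<le> vec.dim (vec.span {v, x})"
    using assms(1) dim_span_pair[OF assms(4,5)] unfolding pg_line_def by simp
  ultimately show ?thesis
    using assms(1) vec.subspace_dim_equal[OF vec.subspace_span] unfolding pg_line_def by blast
qed

lemma pg_line_subset_join:
  assumes "pg_line t" "v \<in> t" "pg_meet t e" "vec.subspace e" "v \<notin> e"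
  shows "t \<subseteq> vec.span (insert v e)"
proof -
  have "vec.subspace t" using assms(1) by (simp add: pg_line_def)
  then obtain x where x: "x \<noteq> 0" "x \<in> t" "x \<in> e"
    using pg_meet_iff assms(3,4) by blast
  have "vec.span {x} \<subseteq> e"
    using x(3) assms(4) by (simp add: vec.span_minimal)
  then have "t = vec.span {v, x}"
    using assms(5) by (intro pg_line_eq_span_pair[OF assms(1,2) x(2,1)]) blast
  also have "\<dots> \<subseteq> vec.span (insert v e)"
    using x(3) by (intro vec.span_mono) simp
  finally show ?thesis .
qed

text \<open>Such a line is the intersection of the two planes joining the point to the two lines.\<close>
lemma pg_line_through_point_meeting_skew_lines_unique:
  assumes e: "pg_line e" and f: "pg_line f" and "skew e f" "v \<notin> e" "v \<notin> f"
    and t: "pg_line t" "v \<in> t" "pg_meet t e" "pg_meet t f"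
    and t': "pg_line t'" "v \<in> t'" "pg_meet t' e" "pg_meet t' f"
  shows "t = t'"
proof -
  define Pe where "Pe = vec.span (insert v e)"
  define Pf where "Pf = vec.span (insert v f)"
  have planes: "pg_plane Pe" "pg_plane Pf"
    unfolding Pe_def Pf_def using pg_plane_join[OF e assms(4)] pg_plane_join[OF f assms(5)] .
  have "e \<subseteq> Pe" "f \<subseteq> Pf"
    unfolding Pe_def Pf_def by (simp_all add: order_trans[OF subset_insertI vec.span_superset])
  have "Pe \<noteq> Pf"
  proof
    assume "Pe = Pf"
    then have "pg_meet e f"
      using pg_meet_lines_in_plane[OF e f planes(1) \<open>e \<subseteq> Pe\<close>] \<open>f \<subseteq> Pf\<close> by simp
    then show False using \<open>skew e f\<close> by (simp add: skew_def)
  qed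
  have sub: "vec.subspace (Pe \<inter> Pf)"
    using planes unfolding pg_plane_def by (simp add: vec.subspace_inter)
  have dim_inter: "vec.dim (Pe \<inter> Pf) \<le> 2"
  proof (rule ccontr)
    assume "\<not> ?thesis"
    then have "Pe \<inter> Pf = Pe" "Pe \<inter> Pf = Pf"
      using planes vec.subspace_dim_equal[OF sub] unfolding pg_plane_def by simp_all
    then show False using \<open>Pe \<noteq> Pf\<close> by simp
  qed
  have line_eq: "s = Pe \<inter> Pf" if s: "pg_line s" "v \<in> s" "pg_meet s e" "pg_meet s f" for s
  proof (rule vec.subspace_dim_equal[OF _ sub])
    show "vec.subspace s" using s(1) by (simp add: pg_line_def)
    show "s \<subseteq> Pe \<inter> Pf"
      using pg_line_subset_join[OF s(1,2,3) _ assms(4)] pg_line_subset_join[OF s(1,2,4) _ assms(5)]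
        e f unfolding Pe_def Pf_def pg_line_def by simp
    show "vec.dim (Pe \<inter> Pf) \<le> vec.dim s" using dim_inter s(1) by (simp add: pg_line_def)
  qed
  show ?thesis using line_eq[OF t] line_eq[OF t'] by simp
qed

lemma repair31I:
  assumes "vec.subspace a" "vec.subspace b" "vec.subspace c"
    and "v \<in> a" "w \<in> b" "u \<in> c" "v \<noteq> 0" "w \<noteq> 0" "u \<noteq> 0"
    and "d \<subseteq> vec.span {v, w, u}"
  shows "repair31 a b c d"
  unfolding repair31_def
proof (intro exI conjI)
  show "pg_point (vec.span {v})" "pg_point (vec.span {w})" "pg_point (vec.span {u})"
    using assms(7-9) by (simp_all add: pg_point_span_singleton)
  show "vec.span {v} \<subseteq> a" "vec.span {w} \<subseteq> b" "vec.span {u} \<subseteq> c"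
    using assms(1-6) by (simp_all add: vec.span_minimal)
  have "vec.span {v, w, u} \<subseteq> vec.span (vec.span {v} \<union> vec.span {w} \<union> vec.span {u})"
    by (intro vec.span_mono) (auto intro: vec.span_base)
  then show "d \<subseteq> vec.span (vec.span {v} \<union> vec.span {w} \<union> vec.span {u})"
    using assms(10) by blast
qed

lemma repair31_or_line_through_meets:
  assumes a: "pg_line a" and b: "pg_line b" and c: "pg_line c" and d: "pg_line d"
    and "skew a b" "skew a d" "v \<in> a" "v \<noteq> 0"
  shows "repair31 a b c d \<or> (\<exists>t. pg_line t \<and> v \<in> t \<and> (\<forall>m\<in>{b, c, d}. pg_meet t m))"
proof -
  have subspaces: "vec.subspace a" "vec.subspace b" "vec.subspace c" "vec.subspace d"
    using a b c d unfolding pg_line_def by blast+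
  define P where "P = vec.span (insert v d)"
  have P: "pg_plane P"
    unfolding P_def using d skew_notin assms(6-8) by (blast intro: pg_plane_join)
  then have subspace_P: "vec.subspace P" by (simp add: pg_plane_def)
  obtain w where w: "w \<noteq> 0" "w \<in> b" "w \<in> P"
    using pg_meet_line_plane[OF b P] pg_meet_iff subspaces subspace_P by blast
  obtain u where u: "u \<noteq> 0" "u \<in> c" "u \<in> P"
    using pg_meet_line_plane[OF c P] pg_meet_iff subspaces subspace_P by blast
  have "vec.span {v} \<subseteq> a"
    using assms(7) subspaces by (simp add: vec.span_minimal)
  moreover have "w \<notin> a"
    using skew_notin[OF _ w(2,1)] \<open>skew a b\<close> by (simp add: skew_commute)
  ultimately have w_indep: "w \<notin> vec.span {v}" by blast
  have "v \<in> P" "d \<subseteq> P"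
    unfolding P_def using vec.span_superset by blast+
  show ?thesis
  proof (cases "u \<in> vec.span {w, v}")
    case True
    define t where "t = vec.span {w, v}"
    have t: "pg_line t"
      unfolding t_def using pg_line_span_pair[OF assms(8) w_indep] .
    have "t \<subseteq> P"
      unfolding t_def using \<open>v \<in> P\<close> w(3) subspace_P by (simp add: vec.span_minimal)
    then have "pg_meet t d" using pg_meet_lines_in_plane[OF t d P] \<open>d \<subseteq> P\<close> by blast
    moreover have "pg_meet t b" "pg_meet t c"
      using w u True vec.span_base[of w "{w, v}"] unfolding t_def pg_meet_def by blast+
    moreover have "v \<in> t" unfolding t_def by (simp add: vec.span_base)
    ultimately show ?thesis using t by blast
  next
    case False
    have "vec.dim (vec.span {u, w, v}) = 3"
      using False dim_span_pair[OF assms(8) w_indep] by (simp add: vec.dim_insert)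
    moreover have "vec.span {u, w, v} \<subseteq> P"
      using subspace_P \<open>v \<in> P\<close> w(3) u(3) by (simp add: vec.span_minimal)
    ultimately have "vec.span {u, w, v} = P"
      using vec.subspace_dim_equal[OF vec.subspace_span subspace_P] P by (simp add: pg_plane_def)
    then have "d \<subseteq> vec.span {v, w, u}"
      using \<open>d \<subseteq> P\<close> by (simp add: insert_commute)
    then have "repair31 a b c d"
      by (rule repair31I[OF subspaces(1-3) assms(7) w(2) u(2) assms(8) w(1) u(1)])
    then show ?thesis ..
  qed
qed

lemma repair31_swap12:
  assumes "repair31 a b c d"
  shows "repair31 b a c d"
proof -
  obtain P1 P2 P3 where "pg_point P1" "pg_point P2" "pg_point P3" "P1 \<subseteq> a" "P2 \<subseteq> b" "P3 \<subseteq> c"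
    and "d \<subseteq> vec.span (P1 \<union> P2 \<union> P3)"
    using assms unfolding repair31_def by blast
  moreover have "P1 \<union> P2 \<union> P3 = P2 \<union> P1 \<union> P3" by blast
  ultimately show ?thesis unfolding repair31_def by metis
qed

lemma repair31_if_line_meets_first_misses_one:
  assumes lines: "\<forall>m\<in>{a, b, c, d}. pg_line m" and skew: "pairwise skew {a, b, c, d}"
    and distinct: "distinct [a, b, c, d]"
    and t: "pg_line t" "g \<in> {b, c, d}" "\<not> pg_meet t g" "\<forall>m\<in>{a, b, c, d} - {g}. pg_meet t m"
  shows "repair31 a b c d"
proof -
  have "a \<noteq> g" using t(2) distinct by auto
  then have "pg_meet t a" using t(4) by simp
  moreover have "vec.subspace t" "vec.subspace a"
    using lines t(1) unfolding pg_line_def by simp_all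
  ultimately obtain v where v: "v \<noteq> 0" "v \<in> t" "v \<in> a"
    using pg_meet_iff[of t a] by blast
  obtain e f where ef: "e \<in> {b, c, d}" "f \<in> {b, c, d}" "e \<noteq> f" "e \<noteq> g" "f \<noteq> g"
    using t(2) distinct by (metis distinct_length_2_or_more insertCI)
  have "e \<noteq> a" "f \<noteq> a" using ef distinct by auto
  then have "skew a e" "skew a f" "skew e f"
    using skew ef unfolding pairwise_def by auto
  then have "v \<notin> e" "v \<notin> f"
    using skew_notin v(1,3) by blast+
  have "skew a b" "skew a d"
    using skew distinct unfolding pairwise_def by auto
  then have "repair31 a b c d \<or> (\<exists>s. pg_line s \<and> v \<in> s \<and> (\<forall>m\<in>{b, c, d}. pg_meet s m))"
    using lines by (intro repair31_or_line_through_meets) (simp_all add: v)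
  then consider (repair) "repair31 a b c d"
    | (line) s where "pg_line s" "v \<in> s" "\<forall>m\<in>{b, c, d}. pg_meet s m"
    by blast
  then show ?thesis
  proof cases
    case (line s)
    have "pg_line e" "pg_line f" using lines ef(1,2) by auto
    moreover have "pg_meet s e" "pg_meet s f" "pg_meet s g" using line(3) ef(1,2) t(2) by auto
    moreover have "pg_meet t e" "pg_meet t f" using t(4) ef by auto
    ultimately have "s = t"
      using pg_line_through_point_meeting_skew_lines_unique[OF _ _ \<open>skew e f\<close> \<open>v \<notin> e\<close> \<open>v \<notin> f\<close>
          line(1,2) _ _ t(1) v(2)]
      by blast
    then show ?thesis using \<open>pg_meet s g\<close> t(3) by simp
  qed
qed

lemma repair31_if_line_misses_one:
  assumes lines: "\<forall>m\<in>{a, b, c, d}. pg_line m" and skew: "pairwise skew {a, b, c, d}"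
    and distinct: "distinct [a, b, c, d]"
    and t: "pg_line t" "g \<in> {a, b, c, d}" "\<not> pg_meet t g" "\<forall>m\<in>{a, b, c, d} - {g}. pg_meet t m"
  shows "repair31 a b c d"
proof (cases "g = a")
  case True
  have swap: "{b, a, c, d} = {a, b, c, d}" by (simp add: insert_commute)
  have "repair31 b a c d"
  proof (rule repair31_if_line_meets_first_misses_one[OF _ _ _ t(1) _ t(3)])
    show "\<forall>m\<in>{b, a, c, d}. pg_line m" "pairwise skew {b, a, c, d}"
      "\<forall>m\<in>{b, a, c, d} - {g}. pg_meet t m"
      unfolding swap by (fact lines skew t(4))+
    show "distinct [b, a, c, d]" using distinct by auto
    show "g \<in> {a, c, d}" using True by simp
  qed
  then show ?thesis by (rule repair31_swap12)
next
  case False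
  then have "g \<in> {b, c, d}" using t(2) by simp
  then show ?thesis
    using repair31_if_line_meets_first_misses_one[OF lines skew distinct t(1) _ t(3,4)] by blast
qed

theorem mainTheorem3:
  fixes S :: "(('a::{field,finite}) ^ 4) set set"
    and l1 l2 l3 l4 :: "('a ^ 4) set"
  assumes "regular_spread S"
    and "l1 \<in> S" "l2 \<in> S" "l3 \<in> S"
    and "l1 \<noteq> l2" "l1 \<noteq> l3" "l2 \<noteq> l3"
    and "l4 \<in> S - regulus l1 l2 l3"
  shows "\<forall>a b c d. {a, b, c, d} = {l1, l2, l3, l4} \<and> distinct [a, b, c, d]
           \<longrightarrow> repair31 a b c d"
proof (intro allI impI, elim conjE)
  fix a b c d
  assume perm: "{a, b, c, d} = {l1, l2, l3, l4}" and distinct: "distinct [a, b, c, d]"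
  have "spread S" "{l1, l2, l3, l4} \<subseteq> S"
    using assms(1-4,8) by (simp_all add: regular_spread_def)
  then have lines: "\<forall>m\<in>{a, b, c, d}. pg_line m" and skew: "pairwise skew {a, b, c, d}"
    unfolding perm spread_def pairwise_def by (meson subsetD)+
  obtain t where t: "transversal t l1 l2 l3" "\<not> pg_meet l4 t"
    using assms(8) lines unfolding perm regulus_def by auto
  show "repair31 a b c d"
  proof (rule repair31_if_line_misses_one[OF lines skew distinct])
    show "pg_line t" "\<not> pg_meet t l4"
      using t unfolding transversal_def by (simp_all add: pg_meet_commute)
    show "l4 \<in> {a, b, c, d}" unfolding perm by simp
    show "\<forall>m\<in>{a, b, c, d} - {l4}. pg_meet t m"
      using t(1) unfolding perm transversal_def by auto
  qed
qed

end
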